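(* Let $G$ be a trigraph with underlying simple graph $H$. If $\operatorname{stww}(G)>\Delta(G)^2$, then $\operatorname{tww}(G)=\operatorname{tww}(H)$.
   Context: A trigraph is a finite simple graph whose edges are each colored red or black; a graph is viewed as a trigraph with all edges black, and the underlying simple graph of a trigraph forgets the colors. $\Delta(G)$ denotes the maximum degree of the underlying graph. The red degree of a vertex is the number of red edges incident to it. For a partition $\mathcal{P}$ of $V(G)$, the quotient trigraph $G/\mathcal{P}$ has vertex set $\mathcal{P}$; two distinct parts $U,W$ are joined by a black edge if every pair $\{u,w\}$ with $u\in U,w\in W$ is a black edge of $G$, are non-adjacent if no such pair is an edge, and are joined by a red edge otherwise. A contraction sequence of an $n$-vertex trigraph $G$ is a sequence $\mathcal{P}_n,\dots,\mathcal{P}_1$ of partitions of $V(G)$ where $\mathcal{P}_n$ is the partition into singletons and each $\mathcal{P}_i$ arises from $\mathcal{P}_{i+1}$ by merging two parts; its width is the maximum red degree over all $G/\mathcal{P}_i$, and $\operatorname{tww}(G)$ is the minimum width of a contraction sequence. The sparse twin-width is $\operatorname{stww}(G)\coloneqq\operatorname{tww}(G_{\mathrm{red}})$, where $G_{\mathrm{red}}$ is obtained from $G$ by coloring all edges red. *)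

theory Defs
  imports Main
begin

text \<open>A trigraph on a vertex type 'a is given by a finite vertex set V, a set B of black
edges and a set R of red edges; edges are 2-element subsets of V, and B, R are disjoint.\<close>

definition trigraph :: "'a set \<Rightarrow> 'a set set \<Rightarrow> 'a set set \<Rightarrow> bool" where
  "trigraph V B R \<longleftrightarrow> finite V \<and>
     (\<forall>e\<in>B \<union> R. e \<subseteq> V \<and> card e = 2) \<and> B \<inter> R = {}"

definition max_degree :: "'a set \<Rightarrow> 'a set set \<Rightarrow> 'a set set \<Rightarrow> nat" where
  "max_degree V B R = Max (insert 0 ((\<lambda>v. card {w. {v, w} \<in> B \<union> R}) ` V))"

definition quot_red :: "'a set set \<Rightarrow> 'a set set \<Rightarrow> 'a set \<Rightarrow> 'a set \<Rightarrow> bool" where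
  "quot_red B R U W \<longleftrightarrow>
     \<not> (\<forall>u\<in>U. \<forall>w\<in>W. {u, w} \<in> B) \<and> (\<exists>u\<in>U. \<exists>w\<in>W. {u, w} \<in> B \<union> R)"

definition quot_red_degree :: "'a set set \<Rightarrow> 'a set set \<Rightarrow> 'a set set \<Rightarrow> 'a set \<Rightarrow> nat" where
  "quot_red_degree B R P U = card {W \<in> P. W \<noteq> U \<and> quot_red B R U W}"

text \<open>A contraction sequence P_n, ..., P_1 (n = card V), indexed by i.\<close>
definition contraction_sequence :: "'a set \<Rightarrow> (nat \<Rightarrow> 'a set set) \<Rightarrow> bool" where
  "contraction_sequence V P \<longleftrightarrow>
     P (card V) = (\<lambda>v. {v}) ` V \<and>
     (\<forall>i. 1 \<le> i \<and> i < card V \<longrightarrow>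
        (\<exists>X Y. X \<in> P (Suc i) \<and> Y \<in> P (Suc i) \<and> X \<noteq> Y \<and>
               P i = insert (X \<union> Y) (P (Suc i) - {X, Y})))"

definition seq_width_le :: "'a set \<Rightarrow> 'a set set \<Rightarrow> 'a set set \<Rightarrow> (nat \<Rightarrow> 'a set set) \<Rightarrow> nat \<Rightarrow> bool" where
  "seq_width_le V B R P k \<longleftrightarrow>
     (\<forall>i\<in>{1..card V}. \<forall>U\<in>P i. quot_red_degree B R (P i) U \<le> k)"

definition tww :: "'a set \<Rightarrow> 'a set set \<Rightarrow> 'a set set \<Rightarrow> nat" where
  "tww V B R = (LEAST k. \<exists>P. contraction_sequence V P \<and> seq_width_le V B R P k)"

text \<open>Sparse twin-width: twin-width of G with all edges coloured red.\<close>
definition stww :: "'a set \<Rightarrow> 'a set set \<Rightarrow> 'a set set \<Rightarrow> nat" where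
  "stww V B R = tww V {} (B \<union> R)"

end

theory Submission
  imports Defs "HOL-Library.Disjoint_Sets"
begin

text \<open>G, its underlying graph H and the all-red trigraph share their contraction sequences,
  and along any of them recolouring black edges red only turns quotient edges red, so
  tww(H) \<le> tww(G) \<le> stww(G). Conversely, let U be a part of a partition P. If some other part W
  is completely joined to U, then U lies in the neighbourhood of a vertex of W, so
  |U| \<le> \<Delta> and the neighbourhood of U meets at most \<Delta>^2 parts. Otherwise every red edge at U in
  the all-red quotient is red in H/P as well. Hence stww(G) \<le> max(tww(H), \<Delta>^2), and the
  hypothesis stww(G) > \<Delta>^2 closes the chain.\<close>

lemma partition_on_merge:
  assumes P: "partition_on A P" and XY: "X \<in> P" "Y \<in> P" "X \<noteq> Y"
  shows "partition_on A (insert (X \<union> Y) (P - {X, Y}))"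
proof (rule partition_onI)
  show "\<Union>(insert (X \<union> Y) (P - {X, Y})) = A"
    using partition_onD1[OF P] XY by blast
  show "{} \<notin> insert (X \<union> Y) (P - {X, Y})"
    using partition_onD3[OF P] XY by auto
  show "disjnt p q"
    if "p \<in> insert (X \<union> Y) (P - {X, Y})" "q \<in> insert (X \<union> Y) (P - {X, Y})" "p \<noteq> q" for p q
    using that partition_onD2[OF P] XY unfolding disjnt_def disjoint_def by auto
qed

lemma partition_on_contraction_sequence:
  assumes cs: "contraction_sequence V P" and i: "1 \<le> i" "i \<le> card V"
  shows "partition_on V (P i)"
  using i(2)
proof (induction i rule: inc_induct)
  case base
  have "P (card V) = (\<lambda>v. {v}) ` V" using cs unfolding contraction_sequence_def by simp
  then show ?case using partition_on_singletons by simp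
next
  case (step n)
  have "1 \<le> n" "n < card V" using step.hyps i(1) by auto
  then have "\<exists>X Y. X \<in> P (Suc n) \<and> Y \<in> P (Suc n) \<and> X \<noteq> Y \<and>
               P n = insert (X \<union> Y) (P (Suc n) - {X, Y})"
    using cs unfolding contraction_sequence_def by simp
  then obtain X Y where "X \<in> P (Suc n)" "Y \<in> P (Suc n)" "X \<noteq> Y"
      "P n = insert (X \<union> Y) (P (Suc n) - {X, Y})" by blast
  then show ?case using partition_on_merge[OF step.IH] by simp
qed

lemma card_parts_meeting_le:
  assumes P: "disjoint P" and S: "finite S"
  shows "card {W \<in> P. W \<inter> S \<noteq> {}} \<le> card S"
proof -
  define pick where "pick W = (SOME x. x \<in> W \<inter> S)" for W
  have pick: "pick W \<in> W \<inter> S" if "W \<inter> S \<noteq> {}" for W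
    unfolding pick_def some_in_eq by (rule that)
  have "inj_on pick {W \<in> P. W \<inter> S \<noteq> {}}"
  proof (rule inj_onI)
    fix W W' assume W: "W \<in> {W \<in> P. W \<inter> S \<noteq> {}}" and W': "W' \<in> {W \<in> P. W \<inter> S \<noteq> {}}"
      and eq: "pick W = pick W'"
    have "pick W \<in> W \<inter> W'" using pick[of W] pick[of W'] W W' eq by simp
    then show "W = W'" using disjointD[OF P] W W' by blast
  qed
  moreover have "pick ` {W \<in> P. W \<inter> S \<noteq> {}} \<subseteq> S" using pick by auto
  ultimately show ?thesis using S by (rule card_inj_on_le)
qed

lemma card_partition_on_le:
  assumes P: "partition_on A P" and A: "finite A"
  shows "card P \<le> card A"
proof -
  have "W \<inter> A = W" "W \<noteq> {}" if "W \<in> P" for W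
    using that partition_onD1[OF P] partition_onD3[OF P] by auto
  then have "card P = card {W \<in> P. W \<inter> A \<noteq> {}}" by (intro arg_cong[where f = card]) auto
  also have "\<dots> \<le> card A" using partition_onD2[OF P] A by (rule card_parts_meeting_le)
  finally show ?thesis .
qed

lemma quot_red_degree_le_card: "finite P \<Longrightarrow> quot_red_degree B R P U \<le> card P"
  unfolding quot_red_degree_def by (intro card_mono) auto

lemma quot_red_degree_mono:
  assumes "finite P" "\<And>W. quot_red B R U W \<Longrightarrow> quot_red B' R' U W"
  shows "quot_red_degree B R P U \<le> quot_red_degree B' R' P U"
  unfolding quot_red_degree_def using assms by (intro card_mono) auto

lemma seq_width_le_card:
  assumes fin: "finite V" and cs: "contraction_sequence V P"
  shows "seq_width_le V B R P (card V)"
  unfolding seq_width_le_def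
proof (intro ballI)
  fix i U assume "i \<in> {1..card V}"
  then have P: "partition_on V (P i)"
    using partition_on_contraction_sequence[OF cs] by simp
  have "quot_red_degree B R (P i) U \<le> card (P i)"
    using finite_elements[OF fin P] by (rule quot_red_degree_le_card)
  also have "\<dots> \<le> card V" using P fin by (rule card_partition_on_le)
  finally show "quot_red_degree B R (P i) U \<le> card V" .
qed

lemma tww_le_max:
  assumes fin: "finite V"
    and le: "\<And>P U. partition_on V P \<Longrightarrow> U \<in> P \<Longrightarrow>
               quot_red_degree B R P U \<le> max (quot_red_degree B' R' P U) d"
  shows "tww V B R \<le> max (tww V B' R') d"
proof (cases "\<exists>P. contraction_sequence V P")
  case True
  then have "\<exists>k P. contraction_sequence V P \<and> seq_width_le V B' R' P k"
    using seq_width_le_card[OF fin] by blast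
  then have "\<exists>P. contraction_sequence V P \<and> seq_width_le V B' R' P (tww V B' R')"
    unfolding tww_def by (rule LeastI_ex)
  then obtain P where cs: "contraction_sequence V P"
      and width: "seq_width_le V B' R' P (tww V B' R')" by blast
  have "seq_width_le V B R P (max (tww V B' R') d)"
    unfolding seq_width_le_def
  proof (intro ballI)
    fix i U assume i: "i \<in> {1..card V}" and U: "U \<in> P i"
    have "quot_red_degree B' R' (P i) U \<le> tww V B' R'"
      using width i U unfolding seq_width_le_def by blast
    moreover have "partition_on V (P i)"
      using partition_on_contraction_sequence[OF cs] i by simp
    ultimately show "quot_red_degree B R (P i) U \<le> max (tww V B' R') d"
      using le[OF _ U] by fastforce
  qed
  with cs show ?thesis
    unfolding tww_def[of V B R] by (intro Least_le) blast
next
  case False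
  \<comment> \<open>both twin-widths are then LEAST of an unsatisfiable predicate\<close>
  then show ?thesis by (simp add: tww_def)
qed

lemma tww_mono:
  assumes fin: "finite V" and red: "\<And>U W. quot_red B R U W \<Longrightarrow> quot_red B' R' U W"
  shows "tww V B R \<le> tww V B' R'"
proof -
  have "tww V B R \<le> max (tww V B' R') 0"
    using fin
  proof (rule tww_le_max)
    fix P U assume "partition_on V P"
    then have "finite P" using fin by (intro finite_elements)
    then show "quot_red_degree B R P U \<le> max (quot_red_degree B' R' P U) 0"
      using quot_red_degree_mono[OF _ red] by simp
  qed
  then show ?thesis by simp
qed

definition neighbours :: "'a set set \<Rightarrow> 'a \<Rightarrow> 'a set" where
  "neighbours E v = {w. {v, w} \<in> E}"

lemma neighbours_subset:
  assumes "trigraph V B R"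
  shows "neighbours (B \<union> R) v \<subseteq> V"
proof
  fix w assume "w \<in> neighbours (B \<union> R) v"
  then have "{v, w} \<subseteq> V" using assms unfolding trigraph_def neighbours_def by blast
  then show "w \<in> V" by simp
qed

lemma card_neighbours_le_max_degree:
  assumes tg: "trigraph V B R" and v: "v \<in> V"
  shows "card (neighbours (B \<union> R) v) \<le> max_degree V B R"
  unfolding max_degree_def
proof (rule Max_ge)
  show "finite (insert 0 ((\<lambda>v. card {w. {v, w} \<in> B \<union> R}) ` V))"
    using tg unfolding trigraph_def by simp
  show "card (neighbours (B \<union> R) v) \<in> insert 0 ((\<lambda>v. card {w. {v, w} \<in> B \<union> R}) ` V)"
    using v unfolding neighbours_def by simp
qed

lemma card_UN_neighbours_le:
  assumes tg: "trigraph V B R" and S: "S \<subseteq> V"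
  shows "card (\<Union>v\<in>S. neighbours (B \<union> R) v) \<le> card S * max_degree V B R"
proof -
  have "finite S" using tg S finite_subset unfolding trigraph_def by blast
  then have "card (\<Union>v\<in>S. neighbours (B \<union> R) v) \<le> (\<Sum>v\<in>S. card (neighbours (B \<union> R) v))"
    by (rule card_UN_le)
  also have "\<dots> \<le> (\<Sum>v\<in>S. max_degree V B R)"
    using card_neighbours_le_max_degree[OF tg] S by (intro sum_mono) auto
  finally show ?thesis by simp
qed

lemma quot_red_degree_all_red_le:
  assumes tg: "trigraph V B R" and P: "partition_on V P" and U: "U \<in> P"
  shows "quot_red_degree {} (B \<union> R) P U
           \<le> max (quot_red_degree (B \<union> R) {} P U) ((max_degree V B R)\<^sup>2)"
proof (cases "\<exists>W\<in>P. W \<noteq> U \<and> (\<forall>u\<in>U. \<forall>w\<in>W. {u, w} \<in> B \<union> R)")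
  case True
  let ?\<Delta> = "max_degree V B R"
  let ?N = "\<Union>u\<in>U. neighbours (B \<union> R) u"
  have fin: "finite V" using tg unfolding trigraph_def by simp
  have parts_V: "X \<subseteq> V" if "X \<in> P" for X
    using that partition_onD1[OF P] by blast
  obtain W where W: "W \<in> P" "\<forall>u\<in>U. \<forall>w\<in>W. {u, w} \<in> B \<union> R"
    using True by blast
  moreover have "W \<noteq> {}" using W(1) partition_onD3[OF P] by auto
  ultimately obtain w where w: "w \<in> W" by blast
  then have "U \<subseteq> neighbours (B \<union> R) w"
    using W(2) unfolding neighbours_def by (auto simp: insert_commute)
  then have "card U \<le> card (neighbours (B \<union> R) w)"
    using neighbours_subset[OF tg] fin by (intro card_mono) (auto intro: finite_subset)
  also have "\<dots> \<le> ?\<Delta>"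
    using card_neighbours_le_max_degree[OF tg] w parts_V[OF W(1)] by blast
  finally have card_U: "card U \<le> ?\<Delta>" .
  have "{X \<in> P. X \<noteq> U \<and> quot_red {} (B \<union> R) U X} \<subseteq> {X \<in> P. X \<inter> ?N \<noteq> {}}"
    unfolding quot_red_def neighbours_def by blast
  then have "quot_red_degree {} (B \<union> R) P U \<le> card {X \<in> P. X \<inter> ?N \<noteq> {}}"
    unfolding quot_red_degree_def using finite_elements[OF fin P] by (intro card_mono) auto
  also have "\<dots> \<le> card ?N"
    using partition_onD2[OF P] neighbours_subset[OF tg] fin
    by (intro card_parts_meeting_le) (auto intro: finite_subset)
  also have "\<dots> \<le> card U * ?\<Delta>" using card_UN_neighbours_le[OF tg parts_V[OF U]] .
  also have "\<dots> \<le> ?\<Delta>\<^sup>2" using card_U by (simp add: power2_eq_square)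
  finally show ?thesis by simp
next
  case False
  then have "{W \<in> P. W \<noteq> U \<and> quot_red {} (B \<union> R) U W}
           = {W \<in> P. W \<noteq> U \<and> quot_red (B \<union> R) {} U W}"
    unfolding quot_red_def by blast
  then show ?thesis unfolding quot_red_degree_def by simp
qed

theorem mainTheorem11:
  fixes V :: "'a set" and B R :: "'a set set"
  assumes "trigraph V B R"
    and "stww V B R > (max_degree V B R)^2"
  shows "tww V B R = tww V (B \<union> R) {}"
proof -
  have fin: "finite V" using assms(1) unfolding trigraph_def by simp
  have "tww V (B \<union> R) {} \<le> tww V B R"
    using fin by (rule tww_mono) (auto simp: quot_red_def)
  moreover have "tww V B R \<le> stww V B R"
    unfolding stww_def using fin by (rule tww_mono) (auto simp: quot_red_def)
  moreover have "stww V B R \<le> max (tww V (B \<union> R) {}) ((max_degree V B R)\<^sup>2)"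
    unfolding stww_def using fin quot_red_degree_all_red_le[OF assms(1)] by (rule tww_le_max)
  ultimately show ?thesis using assms(2) by simp
qed

end
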